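(* Let $A$ be an integral domain such that $\operatorname{Sper}A=\emptyset$ (equivalently, there is no ring homomorphism from $A$ to a real closed field; equivalently, $-1$ is a sum of squares in $A$). Let $K$ be the fraction field of $A$, $\bar K$ an algebraic closure and $\bar A$ the integral closure of $A$ in $\bar K$. Then every $\theta\in\bar A$ is an eigenvalue of some symmetric matrix $M\in\operatorname{Sym}_r(A)$ for a suitable $r$.
   Context: $\operatorname{Sper}A$ is the real spectrum of $A$: the set of pairs $(\mathfrak p,P)$ with $\mathfrak p$ a prime ideal of $A$ and $P$ an ordering of the residue field $\kappa(\mathfrak p)$. $\operatorname{Sym}_r(A)$ is the set of symmetric $r\times r$ matrices over $A$; an eigenvalue of $M$ is a root of $\det(X\cdot \mathrm{I}_r-M)$ in $\bar K$. *)

theory Defs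
  imports "HOL-Computational_Algebra.Polynomial" "Jordan_Normal_Form.Char_Poly"
begin

definition is_prime_ideal :: "'a::comm_ring_1 set \<Rightarrow> bool" where
  "is_prime_ideal p \<longleftrightarrow>
     0 \<in> p \<and> (\<forall>a\<in>p. \<forall>b\<in>p. a + b \<in> p) \<and> (\<forall>a\<in>p. \<forall>x. x * a \<in> p) \<and>
     1 \<notin> p \<and> (\<forall>a b. a * b \<in> p \<longrightarrow> a \<in> p \<or> b \<in> p)"

text \<open>A point (p, P) of Sper A, i.e. a prime ideal p together with an
  ordering of the residue field kappa(p) = Frac(A/p), is encoded (as usual, cf.
  Bochnak-Coste-Roy 7.1) by the set P of elements of A whose image in kappa(p) is
  nonnegative for that ordering: P is a prime cone of A with support p.\<close>
definition Sper :: "('a::comm_ring_1 set \<times> 'a set) set" where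
  "Sper = {(p, P). is_prime_ideal p \<and>
     (\<forall>a\<in>P. \<forall>b\<in>P. a + b \<in> P) \<and> (\<forall>a\<in>P. \<forall>b\<in>P. a * b \<in> P) \<and>
     (\<forall>x. x * x \<in> P) \<and>
     (\<forall>a. a \<in> P \<or> - a \<in> P) \<and> {a. a \<in> P \<and> - a \<in> P} = p}"

definition Sym :: "nat \<Rightarrow> 'a mat set" where
  "Sym r = {M. M \<in> carrier_mat r r \<and> transpose_mat M = M}"

end

theory Submission
  imports Defs
begin

text \<open>If \<open>Sper A = {}\<close> then \<open>-1\<close> is a sum of squares in \<open>A\<close>: otherwise a maximal proper
  preordering of \<open>A\<close> (Zorn) is a prime cone, i.e. a point of \<open>Sper A\<close>. Hence there is
  \<open>u = (1, x\<^sub>1, \<dots>, x\<^sub>m)\<close> over \<open>A\<close> with \<open>u \<bullet> u = 0\<close>.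
  Let \<open>C\<close> be a companion matrix of a monic \<open>f\<close> over \<open>A\<close> with \<open>f(\<theta>) = 0\<close>, so that
  \<open>C v = \<theta> v\<close> for \<open>v = (1, \<theta>, \<dots>, \<theta>\<^sup>n\<^sup>-\<^sup>1)\<close>. The symmetric matrix
  \<open>M = C \<otimes> u e\<^sub>0\<^sup>T + C\<^sup>T \<otimes> e\<^sub>0 u\<^sup>T\<close> over \<open>A\<close> satisfies
  \<open>M (v \<otimes> u) = C v \<otimes> u + C\<^sup>T v \<otimes> (u \<bullet> u) e\<^sub>0 = \<theta> (v \<otimes> u)\<close>,
  so \<open>\<theta>\<close> is a root of the characteristic polynomial of \<open>M\<close>.\<close>

section \<open>Preorderings and the real spectrum\<close>

definition proper_preordering :: "'a::comm_ring_1 set \<Rightarrow> bool" where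
  "proper_preordering T \<longleftrightarrow> (\<forall>a\<in>T. \<forall>b\<in>T. a + b \<in> T) \<and> (\<forall>a\<in>T. \<forall>b\<in>T. a * b \<in> T)
     \<and> (\<forall>x. x * x \<in> T) \<and> -1 \<notin> T"

definition maximal_proper_preordering :: "'a::comm_ring_1 set \<Rightarrow> bool" where
  "maximal_proper_preordering T \<longleftrightarrow>
     proper_preordering T \<and> (\<forall>T'. proper_preordering T' \<longrightarrow> T \<subseteq> T' \<longrightarrow> T' = T)"

definition sums_of_squares :: "'a::comm_ring_1 set" where
  "sums_of_squares = range (\<lambda>xs. sum_list (map (\<lambda>x. x * x) xs))"

lemma proper_preordering_adjoin:
  fixes T :: "'a::comm_ring_1 set"
  assumes "proper_preordering T" "-1 \<notin> {t1 + c * t2 | t1 t2. t1 \<in> T \<and> t2 \<in> T}"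
  shows "proper_preordering {t1 + c * t2 | t1 t2. t1 \<in> T \<and> t2 \<in> T}"
proof -
  from assms(1) have add: "\<And>a b. a \<in> T \<Longrightarrow> b \<in> T \<Longrightarrow> a + b \<in> T"
    and mul: "\<And>a b. a \<in> T \<Longrightarrow> b \<in> T \<Longrightarrow> a * b \<in> T" and sq: "\<And>x. x * x \<in> T"
    unfolding proper_preordering_def by auto
  have zero: "0 \<in> T" using sq[of 0] by simp
  let ?T = "{t1 + c * t2 | t1 t2. t1 \<in> T \<and> t2 \<in> T}"
  have "a + b \<in> ?T" "a * b \<in> ?T" if "a \<in> ?T" "b \<in> ?T" for a b
  proof -
    from that obtain t1 t2 t3 t4 where t: "t1 \<in> T" "t2 \<in> T" "t3 \<in> T" "t4 \<in> T"
      and ab: "a = t1 + c * t2" "b = t3 + c * t4" by auto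
    have "a + b = (t1 + t3) + c * (t2 + t4)" using ab by (simp add: algebra_simps)
    moreover have "t1 + t3 \<in> T" "t2 + t4 \<in> T" using t by (simp_all add: add)
    ultimately show "a + b \<in> ?T" by blast
    have "a * b = (t1 * t3 + (c * c) * (t2 * t4)) + c * (t1 * t4 + t2 * t3)"
      using ab by (simp add: algebra_simps)
    moreover have "t1 * t3 + (c * c) * (t2 * t4) \<in> T" "t1 * t4 + t2 * t3 \<in> T"
      using t by (simp_all add: add mul sq)
    ultimately show "a * b \<in> ?T" by blast
  qed
  moreover have "x * x \<in> ?T" for x
    using sq[of x] zero by (intro CollectI exI[of _ "x * x"] exI[of _ 0]) simp
  ultimately show ?thesis
    using assms(2) unfolding proper_preordering_def by (intro conjI ballI allI) simp_all
qed

lemma sums_of_squares_mult: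
  fixes xs ys :: "'a::comm_ring_1 list"
  shows "sum_list (map (\<lambda>x. x * x) xs) * sum_list (map (\<lambda>x. x * x) ys) \<in> sums_of_squares"
proof (induction xs)
  case Nil
  show ?case unfolding sums_of_squares_def by (auto intro: range_eqI[of _ _ "[]"])
next
  case (Cons a xs)
  then obtain zs where zs: "sum_list (map (\<lambda>x. x * x) xs) * sum_list (map (\<lambda>x. x * x) ys)
      = sum_list (map (\<lambda>x. x * x) zs)"
    unfolding sums_of_squares_def by auto
  have "(a * a) * sum_list (map (\<lambda>x. x * x) ys) = sum_list (map (\<lambda>x. x * x) (map ((*) a) ys))"
    by (induction ys) (auto simp: algebra_simps)
  then have "sum_list (map (\<lambda>x. x * x) (a # xs)) * sum_list (map (\<lambda>x. x * x) ys)
      = sum_list (map (\<lambda>x. x * x) (map ((*) a) ys @ zs))"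
    using zs by (simp add: algebra_simps)
  then show ?case unfolding sums_of_squares_def by (metis rangeI)
qed

lemma proper_preordering_sums_of_squares:
  assumes "(-1::'a::comm_ring_1) \<notin> sums_of_squares"
  shows "proper_preordering (sums_of_squares :: 'a set)"
proof -
  have "a + b \<in> sums_of_squares" "a * b \<in> sums_of_squares"
    if "a \<in> sums_of_squares" "b \<in> sums_of_squares" for a b :: 'a
  proof -
    from that obtain xs ys where "a = sum_list (map (\<lambda>x. x * x) xs)" "b = sum_list (map (\<lambda>x. x * x) ys)"
      unfolding sums_of_squares_def by auto
    then show "a + b \<in> sums_of_squares" "a * b \<in> sums_of_squares"
      using sums_of_squares_mult[of xs ys] unfolding sums_of_squares_def
      by (auto intro: range_eqI[of _ _ "xs @ ys"])
  qed
  moreover have "x * x \<in> sums_of_squares" for x :: 'a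
    unfolding sums_of_squares_def by (auto intro: range_eqI[of _ _ "[x]"])
  ultimately show ?thesis using assms unfolding proper_preordering_def by blast
qed

lemma proper_preordering_Union_chain:
  fixes C :: "'a::comm_ring_1 set set"
  assumes "C \<noteq> {}" "subset.chain {T. proper_preordering T} C"
  shows "proper_preordering (\<Union>C)"
proof -
  from assms have pre: "\<And>T. T \<in> C \<Longrightarrow> proper_preordering T"
    and chain: "\<And>X Y. X \<in> C \<Longrightarrow> Y \<in> C \<Longrightarrow> X \<subseteq> Y \<or> Y \<subseteq> X"
    by (auto simp: subset_chain_def)
  have "a + b \<in> \<Union>C \<and> a * b \<in> \<Union>C" if "a \<in> \<Union>C" "b \<in> \<Union>C" for a b
  proof -
    from that obtain X Y where "X \<in> C" "Y \<in> C" "a \<in> X" "b \<in> Y" by auto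
    with chain obtain Z where "Z \<in> C" "a \<in> Z" "b \<in> Z" by blast
    with pre[of Z] show ?thesis unfolding proper_preordering_def by blast
  qed
  moreover have "x * x \<in> \<Union>C" for x
    using assms(1) pre unfolding proper_preordering_def by blast
  ultimately show ?thesis using pre unfolding proper_preordering_def by blast
qed

lemma exists_maximal_proper_preordering:
  fixes T0 :: "'a::comm_ring_1 set"
  assumes "proper_preordering T0"
  shows "\<exists>T :: 'a set. maximal_proper_preordering T"
proof -
  have "\<exists>T\<in>{T :: 'a set. proper_preordering T}. \<forall>T'\<in>{T. proper_preordering T}. T \<subseteq> T' \<longrightarrow> T' = T"
    using assms proper_preordering_Union_chain by (intro subset_Zorn_nonempty) auto
  then show ?thesis unfolding maximal_proper_preordering_def by blast
qed

context
  fixes T :: "'a::comm_ring_1 set"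
  assumes maximal: "maximal_proper_preordering T"
begin

private lemma add: "a \<in> T \<Longrightarrow> b \<in> T \<Longrightarrow> a + b \<in> T"
  and mul: "a \<in> T \<Longrightarrow> b \<in> T \<Longrightarrow> a * b \<in> T"
  and sq: "x * x \<in> T"
  and minus_one: "-1 \<notin> T"
  using maximal unfolding maximal_proper_preordering_def proper_preordering_def by auto

lemma maximal_preordering_adjoin:
  assumes "c \<notin> T"
  obtains t1 t2 where "t1 \<in> T" "t2 \<in> T" "-1 = t1 + c * t2"
proof (rule ccontr)
  let ?T = "{t1 + c * t2 | t1 t2. t1 \<in> T \<and> t2 \<in> T}"
  assume "\<not> thesis"
  then have "-1 \<notin> ?T" using that by blast
  then have "proper_preordering ?T"
    using maximal proper_preordering_adjoin unfolding maximal_proper_preordering_def by blast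
  moreover have "t \<in> ?T" if "t \<in> T" for t
    using that sq[of 0] by (intro CollectI exI[of _ t] exI[of _ 0]) auto
  ultimately have "?T = T" using maximal unfolding maximal_proper_preordering_def by blast
  moreover have "c \<in> ?T" using sq[of 0] sq[of 1] by (intro CollectI exI[of _ 0] exI[of _ 1]) auto
  ultimately show False using assms by simp
qed

lemma maximal_preordering_neg_mult_notin:
  assumes "c \<notin> T" "d \<notin> T"
  shows "- (c * d) \<notin> T"
proof
  assume cd: "- (c * d) \<in> T"
  obtain t1 t2 where t12: "t1 \<in> T" "t2 \<in> T" "-1 = t1 + c * t2"
    using maximal_preordering_adjoin[OF assms(1)] by blast
  obtain t3 t4 where t34: "t3 \<in> T" "t4 \<in> T" "-1 = t3 + d * t4"
    using maximal_preordering_adjoin[OF assms(2)] by blast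
  have "c * t2 = -1 - t1" "d * t4 = -1 - t3"
    using t12(3) t34(3) by (simp_all add: algebra_simps)
  then have "(c * d) * (t2 * t4) = (-1 - t1) * (-1 - t3)"
    by (metis mult.assoc mult.left_commute)
  then have "-1 = t1 + t3 + t1 * t3 + (- (c * d)) * (t2 * t4)"
    by (simp add: algebra_simps)
  moreover have "t1 + t3 + t1 * t3 + (- (c * d)) * (t2 * t4) \<in> T"
    using t12 t34 cd by (intro add mul)
  ultimately show False using minus_one by simp
qed

lemma maximal_preordering_total: "a \<in> T \<or> - a \<in> T"
  using maximal_preordering_neg_mult_notin[of a "- a"] sq[of a] by auto

lemma maximal_preordering_support_prime: "is_prime_ideal {a. a \<in> T \<and> - a \<in> T}"
  unfolding is_prime_ideal_def
proof (intro conjI ballI allI impI)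
  fix a x assume "a \<in> {a. a \<in> T \<and> - a \<in> T}"
  then show "x * a \<in> {a. a \<in> T \<and> - a \<in> T}"
    using maximal_preordering_total[of x] mul[of x a] mul[of x "- a"] mul[of "- x" a] mul[of "- x" "- a"]
    by auto
next
  fix a b assume ab: "a * b \<in> {a. a \<in> T \<and> - a \<in> T}"
  show "a \<in> {a. a \<in> T \<and> - a \<in> T} \<or> b \<in> {a. a \<in> T \<and> - a \<in> T}"
  proof (rule ccontr)
    assume "\<not> ?thesis"
    then obtain a' b' where "a' \<notin> T" "b' \<notin> T" "a' = a \<or> a' = - a" "b' = b \<or> b' = - b"
      by blast
    moreover from this have "- (a' * b') \<in> T" using ab by auto
    ultimately show False using maximal_preordering_neg_mult_notin by blast
  qed
qed (use add[of "- _" "- _"] add sq[of 0] minus_one in auto)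

lemma maximal_preordering_in_Sper: "({a. a \<in> T \<and> - a \<in> T}, T) \<in> Sper"
  unfolding Sper_def using maximal_preordering_support_prime maximal_preordering_total add mul sq
  by auto

end

lemma minus_one_sum_of_squares_if_Sper_empty:
  assumes "(Sper :: ('a::comm_ring_1 set \<times> 'a set) set) = {}"
  shows "(-1::'a) \<in> sums_of_squares"
proof (rule ccontr)
  assume "-1 \<notin> (sums_of_squares :: 'a set)"
  then obtain T :: "'a set" where "maximal_proper_preordering T"
    using proper_preordering_sums_of_squares exists_maximal_proper_preordering by blast
  then show False using maximal_preordering_in_Sper assms by blast
qed

section \<open>Symmetric matrices with a prescribed eigenvalue\<close>

lemma isotropic_vec_if_minus_one_sum_of_squares:
  assumes "(-1::'a::comm_ring_1) \<in> sums_of_squares"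
  obtains u :: "'a::comm_ring_1 vec" where "0 < dim_vec u" "u $ 0 = 1" "u \<bullet> u = 0"
proof -
  from assms obtain xs where xs: "(-1::'a) = sum_list (map (\<lambda>x. x * x) xs)"
    unfolding sums_of_squares_def by blast
  have "vec_of_list xs \<bullet> vec_of_list xs = sum_list (map (\<lambda>x. x * x) xs)"
    by (induction xs) auto
  then have "vec_of_list (1 # xs) \<bullet> vec_of_list (1 # xs) = 0"
    using xs[symmetric] by simp
  then show thesis
    by (intro that[of "vec_of_list (1 # xs)"]) (simp_all add: vec_of_list_index)
qed

definition companion_mat :: "'a::comm_ring_1 poly \<Rightarrow> 'a mat" where
  "companion_mat f = mat (degree f) (degree f)
     (\<lambda>(i, j). if Suc i < degree f then (if j = Suc i then 1 else 0) else - coeff f j)"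

definition power_vec :: "nat \<Rightarrow> 'a::comm_ring_1 \<Rightarrow> 'a vec" where
  "power_vec n x = vec n (\<lambda>i. x ^ i)"

lemma monic_root_degree_pos:
  fixes f :: "'a::comm_ring_1 poly"
  assumes "monic f" "poly f x = 0"
  shows "0 < degree f"
proof (rule ccontr)
  assume "\<not> 0 < degree f"
  then have "f = 1" using assms(1) monic_degree_0 by blast
  then show False using assms(2) by simp
qed

lemma companion_mat_carrier: "companion_mat f \<in> carrier_mat (degree f) (degree f)"
  by (simp add: companion_mat_def)

lemma eigenvector_companion_mat:
  assumes monic: "monic f" and root: "poly f x = 0"
  shows "eigenvector (companion_mat f) (power_vec (degree f) x) x"
proof -
  let ?n = "degree f"
  have n: "0 < ?n" using monic_root_degree_pos[OF assms] .
  have last_row: "(\<Sum>j<?n. - coeff f j * x ^ j) = x ^ ?n"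
  proof -
    have "0 = (\<Sum>j\<le>?n. coeff f j * x ^ j)" using root by (simp add: poly_altdef)
    also have "\<dots> = (\<Sum>j<?n. coeff f j * x ^ j) + x ^ ?n"
      using monic by (simp add: lessThan_Suc_atMost[symmetric])
    finally have "x ^ ?n = - (\<Sum>j<?n. coeff f j * x ^ j)"
      by (simp add: eq_neg_iff_add_eq_0 add.commute)
    then show ?thesis by (simp add: sum_negf)
  qed
  have row: "(\<Sum>j<?n. companion_mat f $$ (i, j) * x ^ j) = x ^ Suc i" if "i < ?n" for i
  proof (cases "Suc i < ?n")
    case True
    then show ?thesis using that by (simp add: companion_mat_def if_distrib[of "\<lambda>c. c * _"] cong: if_cong)
  next
    case False
    then have "Suc i = ?n" using that by simp
    then show ?thesis using that last_row by (simp add: companion_mat_def)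
  qed
  have "companion_mat f *\<^sub>v power_vec ?n x = x \<cdot>\<^sub>v power_vec ?n x"
  proof (rule eq_vecI)
    fix i assume "i < dim_vec (x \<cdot>\<^sub>v power_vec ?n x)"
    then have i: "i < ?n" by (simp add: power_vec_def)
    have "(companion_mat f *\<^sub>v power_vec ?n x) $ i = (\<Sum>j<?n. companion_mat f $$ (i, j) * x ^ j)"
      using i by (simp add: companion_mat_def power_vec_def scalar_prod_def atLeast0LessThan)
    then show "(companion_mat f *\<^sub>v power_vec ?n x) $ i = (x \<cdot>\<^sub>v power_vec ?n x) $ i"
      using i row by (simp add: power_vec_def)
  qed (simp add: companion_mat_def power_vec_def)
  moreover have "power_vec ?n x \<noteq> 0\<^sub>v ?n"
    using n by (metis index_vec index_zero_vec(1) power_0 power_vec_def zero_neq_one)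
  ultimately show ?thesis unfolding eigenvector_def by (simp add: companion_mat_def power_vec_def)
qed

lemma (in comm_ring_hom) map_companion_mat:
  assumes "monic f"
  shows "map_mat hom (companion_mat f) = companion_mat (map_poly hom f)"
proof -
  have "degree (map_poly hom f) = degree f"
    using assms by (simp add: map_poly_degree_eq)
  then show ?thesis
    by (intro eq_matI) (auto simp: companion_mat_def coeff_map_poly hom_distribs)
qed

lemma mult_less_mult_add:
  fixes b j k n :: nat
  assumes "b < n" "j < k"
  shows "b * k + j < n * k"
proof -
  have "Suc b * k \<le> n * k" using assms(1) by (intro mult_le_mono1) simp
  then show ?thesis using assms(2) by simp
qed

lemma mult_add_div:
  fixes b j k :: nat
  shows "j < k \<Longrightarrow> (b * k + j) div k = b"
  by (simp add: mult.commute)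

lemma sum_lessThan_mult:
  fixes g :: "nat \<Rightarrow> 'b::comm_monoid_add"
  shows "(\<Sum>I<n * k. g I) = (\<Sum>b<n. \<Sum>j<k. g (b * k + j))"
proof -
  have "(\<Sum>I<n * k. g I) = (\<Sum>b<n. sum g {b * k..<b * k + k})"
    by (rule sum.nat_group[symmetric])
  also have "\<dots> = (\<Sum>b<n. \<Sum>j<k. g (b * k + j))"
  proof (rule sum.cong[OF refl])
    fix b
    show "sum g {b * k..<b * k + k} = (\<Sum>j<k. g (b * k + j))"
      using sum.shift_bounds_nat_ivl[of g 0 "b * k" k] by (simp add: atLeast0LessThan add.commute)
  qed
  finally show ?thesis .
qed

definition tensor_vec :: "'a::times vec \<Rightarrow> 'a vec \<Rightarrow> 'a vec" where
  "tensor_vec v u = vec (dim_vec v * dim_vec u) (\<lambda>I. v $ (I div dim_vec u) * u $ (I mod dim_vec u))"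

text \<open>Indexing \<open>A\<^sup>n \<otimes> A\<^sup>k\<close> by \<open>a * k + i\<close>, \<open>sym_tensor C u\<close> is
  \<open>C \<otimes> u e\<^sub>0\<^sup>T + (C \<otimes> u e\<^sub>0\<^sup>T)\<^sup>T\<close>, where \<open>k = dim_vec u\<close>.\<close>
definition sym_tensor :: "'a::comm_ring_1 mat \<Rightarrow> 'a vec \<Rightarrow> 'a mat" where
  "sym_tensor C u = (let k = dim_vec u; N = dim_row C * k in mat N N (\<lambda>(I, J).
     C $$ (I div k, J div k) * (if J mod k = 0 then u $ (I mod k) else 0)
     + C $$ (J div k, I div k) * (if I mod k = 0 then u $ (J mod k) else 0)))"

lemma sym_tensor_carrier:
  "sym_tensor C u \<in> carrier_mat (dim_row C * dim_vec u) (dim_row C * dim_vec u)"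
  by (simp add: sym_tensor_def Let_def)

lemma transpose_sym_tensor: "transpose_mat (sym_tensor C u) = sym_tensor C u"
  by (rule eq_matI) (auto simp: sym_tensor_def Let_def)

lemma (in comm_ring_hom) map_sym_tensor:
  assumes "C \<in> carrier_mat n n"
  shows "map_mat hom (sym_tensor C u) = sym_tensor (map_mat hom C) (map_vec hom u)"
proof (rule eq_matI)
  fix I J assume "I < dim_row (sym_tensor (map_mat hom C) (map_vec hom u))"
    "J < dim_col (sym_tensor (map_mat hom C) (map_vec hom u))"
  then have "I < n * dim_vec u" "J < n * dim_vec u"
    using assms by (simp_all add: sym_tensor_def Let_def)
  moreover from this have "0 < dim_vec u" by (cases "dim_vec u") auto
  ultimately have "I div dim_vec u < n" "J div dim_vec u < n" "I mod dim_vec u < dim_vec u" "J mod dim_vec u < dim_vec u"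
    by (auto simp: less_mult_imp_div_less)
  then show "map_mat hom (sym_tensor C u) $$ (I, J) = sym_tensor (map_mat hom C) (map_vec hom u) $$ (I, J)"
    using assms \<open>I < n * dim_vec u\<close> \<open>J < n * dim_vec u\<close>
    by (simp add: sym_tensor_def Let_def hom_distribs)
qed (use assms in \<open>simp_all add: sym_tensor_def Let_def\<close>)

lemma sum_sym_tensor_block:
  fixes u :: "'a::comm_ring_1 vec"
  assumes u: "0 < dim_vec u" "u $ 0 = 1" and isotropic: "u \<bullet> u = 0"
  shows "(\<Sum>j<dim_vec u. (x * (if j = 0 then y else 0) + z * (if i = 0 then u $ j else 0)) * (w * u $ j))
    = x * w * y"
proof -
  have "(\<Sum>j<dim_vec u. x * (if j = 0 then y else 0) * (w * u $ j))
      = (\<Sum>j<dim_vec u. if j = 0 then x * w * y else 0)"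
    using u by (intro sum.cong) (auto simp: mult_ac)
  also have "\<dots> = x * w * y"
    using u by simp
  finally have first: "(\<Sum>j<dim_vec u. x * (if j = 0 then y else 0) * (w * u $ j)) = x * w * y" .
  have "(\<Sum>j<dim_vec u. z * (if i = 0 then u $ j else 0) * (w * u $ j))
      = (if i = 0 then z * w * (u \<bullet> u) else 0)"
    by (simp add: scalar_prod_def atLeast0LessThan sum_distrib_left mult_ac)
  then have second: "(\<Sum>j<dim_vec u. z * (if i = 0 then u $ j else 0) * (w * u $ j)) = 0"
    using isotropic by simp
  show ?thesis
    using first second by (simp add: sum.distrib distrib_right)
qed

lemma sym_tensor_mult_tensor_vec:
  fixes C :: "'a::comm_ring_1 mat"
  assumes C: "C \<in> carrier_mat n n" and v: "v \<in> carrier_vec n" and Cv: "C *\<^sub>v v = \<theta> \<cdot>\<^sub>v v"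
    and u: "0 < dim_vec u" "u $ 0 = 1" and isotropic: "u \<bullet> u = 0"
  shows "sym_tensor C u *\<^sub>v tensor_vec v u = \<theta> \<cdot>\<^sub>v tensor_vec v u"
proof (rule eq_vecI)
  let ?k = "dim_vec u"
  fix I assume "I < dim_vec (\<theta> \<cdot>\<^sub>v tensor_vec v u)"
  then have I: "I < n * ?k" using v by (simp add: tensor_vec_def)
  define a where "a = I div ?k"
  define i where "i = I mod ?k"
  have a: "a < n" using I by (simp add: a_def less_mult_imp_div_less)
  have i: "i < ?k" using u by (simp add: i_def)
  have "(sym_tensor C u *\<^sub>v tensor_vec v u) $ I
      = (\<Sum>J<n * ?k. sym_tensor C u $$ (I, J) * tensor_vec v u $ J)"
    using C v I by (simp add: sym_tensor_def Let_def tensor_vec_def scalar_prod_def atLeast0LessThan)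
  also have "\<dots> = (\<Sum>b<n. \<Sum>j<?k. sym_tensor C u $$ (I, b * ?k + j) * tensor_vec v u $ (b * ?k + j))"
    by (rule sum_lessThan_mult)
  also have "\<dots> = (\<Sum>b<n. C $$ (a, b) * v $ b * u $ i)"
  proof (intro sum.cong refl)
    fix b j assume "b \<in> {..<n}"
    then have bj: "b * ?k + j < n * ?k" if "j < ?k" for j
      using that by (simp add: mult_less_mult_add)
    have "sym_tensor C u $$ (I, b * ?k + j) * tensor_vec v u $ (b * ?k + j) =
        (C $$ (a, b) * (if j = 0 then u $ i else 0)
        + C $$ (b, a) * (if i = 0 then u $ j else 0)) * (v $ b * u $ j)" if "j < ?k" for j
    proof -
      have "(b * ?k + j) div ?k = b" "(b * ?k + j) mod ?k = j"
        using that by (simp_all add: mult_add_div)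
      then show ?thesis using C v I bj[OF that] by (simp add: sym_tensor_def Let_def tensor_vec_def a_def i_def)
    qed
    then show "(\<Sum>j<?k. sym_tensor C u $$ (I, b * ?k + j) * tensor_vec v u $ (b * ?k + j))
        = C $$ (a, b) * v $ b * u $ i"
      using sum_sym_tensor_block[OF u isotropic] by simp
  qed
  also have "\<dots> = (C *\<^sub>v v) $ a * u $ i"
    using C v a by (simp add: scalar_prod_def atLeast0LessThan sum_distrib_right)
  also have "\<dots> = (\<theta> \<cdot>\<^sub>v tensor_vec v u) $ I"
    using Cv v I a by (simp add: tensor_vec_def a_def i_def)
  finally show "(sym_tensor C u *\<^sub>v tensor_vec v u) $ I = (\<theta> \<cdot>\<^sub>v tensor_vec v u) $ I" .
qed (use C v in \<open>simp add: sym_tensor_def Let_def tensor_vec_def\<close>)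

lemma eigenvector_sym_tensor:
  fixes C :: "'a::comm_ring_1 mat"
  assumes C: "C \<in> carrier_mat n n" and ev: "eigenvector C v \<theta>"
    and u: "0 < dim_vec u" "u $ 0 = 1" and isotropic: "u \<bullet> u = 0"
  shows "eigenvector (sym_tensor C u) (tensor_vec v u) \<theta>"
proof -
  from ev C have v: "v \<in> carrier_vec n" "v \<noteq> 0\<^sub>v n" "C *\<^sub>v v = \<theta> \<cdot>\<^sub>v v"
    by (auto simp: eigenvector_def)
  then obtain b where b: "b < n" "v $ b \<noteq> 0" by force
  have bk: "b * dim_vec u < n * dim_vec u"
    using mult_less_mult_add[of b n 0] b u by simp
  have "tensor_vec v u $ (b * dim_vec u) = v $ b"
    using v b u bk by (simp add: tensor_vec_def)
  then have "tensor_vec v u \<noteq> 0\<^sub>v (n * dim_vec u)"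
    using b(2) bk by auto
  then show ?thesis
    using sym_tensor_mult_tensor_vec[OF C v(1,3) u isotropic] C v(1)
    by (simp add: eigenvector_def sym_tensor_def Let_def tensor_vec_def)
qed

lemma (in comm_ring_hom) eigenvector_map_sym_tensor_companion_mat:
  assumes f: "monic f" "poly (map_poly hom f) \<theta> = 0"
    and u: "0 < dim_vec u" "u $ 0 = 1" "u \<bullet> u = 0"
  shows "eigenvector (map_mat hom (sym_tensor (companion_mat f) u))
    (tensor_vec (power_vec (degree f) \<theta>) (map_vec hom u)) \<theta>"
proof -
  have deg: "degree (map_poly hom f) = degree f"
    using f(1) by (simp add: map_poly_degree_eq)
  have "monic (map_poly hom f)"
    using f(1) deg by (simp add: coeff_map_poly)
  then have "eigenvector (map_mat hom (companion_mat f)) (power_vec (degree f) \<theta>) \<theta>"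
    using eigenvector_companion_mat[of "map_poly hom f"] f deg by (simp add: map_companion_mat)
  moreover have "map_vec hom u \<bullet> map_vec hom u = hom (u \<bullet> u)"
    by (simp add: scalar_prod_def hom_distribs)
  ultimately have "eigenvector (sym_tensor (map_mat hom (companion_mat f)) (map_vec hom u))
      (tensor_vec (power_vec (degree f) \<theta>) (map_vec hom u)) \<theta>"
    using u by (intro eigenvector_sym_tensor[of _ "degree f"]) (simp_all add: companion_mat_carrier)
  then show ?thesis
    by (simp add: map_sym_tensor[OF companion_mat_carrier])
qed

theorem corollary4p4:
  fixes \<phi> :: "'a::idom \<Rightarrow> 'k::alg_closed_field" and \<theta> :: 'k
  assumes Sper_empty: "(Sper :: ('a set \<times> 'a set) set) = {}"
    and hom: "\<phi> 0 = 0" "\<phi> 1 = 1" "\<And>x y. \<phi> (x + y) = \<phi> x + \<phi> y"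
      "\<And>x y. \<phi> (x * y) = \<phi> x * \<phi> y"
    and inj: "inj \<phi>"
    and integral: "\<exists>f :: 'a poly. monic f \<and> poly (map_poly \<phi> f) \<theta> = 0"
  shows "\<exists>r. \<exists>M \<in> Sym r. poly (map_poly \<phi> (char_poly M)) \<theta> = 0"
proof -
  interpret comm_ring_hom \<phi> by unfold_locales (simp_all add: hom)
  obtain u :: "'a vec" where u: "0 < dim_vec u" "u $ 0 = 1" "u \<bullet> u = 0"
    using isotropic_vec_if_minus_one_sum_of_squares minus_one_sum_of_squares_if_Sper_empty[OF Sper_empty]
    by blast
  obtain f :: "'a poly" where f: "monic f" "poly (map_poly \<phi> f) \<theta> = 0"
    using integral by blast
  define M where "M = sym_tensor (companion_mat f) u"
  define r where "r = degree f * dim_vec u"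
  have M: "M \<in> carrier_mat r r"
    using sym_tensor_carrier[of "companion_mat f" u] by (simp add: M_def r_def companion_mat_def)
  have "eigenvalue (map_mat \<phi> M) \<theta>"
    using eigenvector_map_sym_tensor_companion_mat[OF f u] unfolding M_def eigenvalue_def by blast
  then have "poly (char_poly (map_mat \<phi> M)) \<theta> = 0"
    using eigenvalue_root_char_poly[of "map_mat \<phi> M" r] M by simp
  then have "poly (map_poly \<phi> (char_poly M)) \<theta> = 0"
    using char_poly_hom[OF M] by simp
  moreover have "M \<in> Sym r"
    using M transpose_sym_tensor unfolding Sym_def M_def by simp
  ultimately show ?thesis by blast
qed

end
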